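(* $R_3(VS)\le 68$: every 3-coloring of $[68]$ contains two integers $a<b$ in $[68]$ of the same color with $b-a$ a positive perfect square.
   Context: For $n\in\mathbb{N}$, $[n]=\{1,\dots,n\}$; a $c$-coloring of $[n]$ is a function $[n]\to[c]$. $R_c(VS)$ (the van der Square number) is the least positive integer $n$ such that every $c$-coloring of $[n]$ contains integers $a<b$ in $[n]$ of the same color with $b-a=x^2$ for some positive integer $x$. *)

theory Defs
  imports Main
begin

definition has_mono_square :: "nat \<Rightarrow> nat \<Rightarrow> (nat \<Rightarrow> nat) \<Rightarrow> bool" where
  "has_mono_square c n f \<longleftrightarrow>
     (\<exists>a\<in>{1..n}. \<exists>b\<in>{1..n}. \<exists>x::nat. a < b \<and> x > 0 \<and> b - a = x^2 \<and> f a = f b)"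

definition vdS_property :: "nat \<Rightarrow> nat \<Rightarrow> bool" where
  "vdS_property c n \<longleftrightarrow>
     (\<forall>f. (\<forall>i\<in>{1..n}. f i \<in> {1..c}) \<longrightarrow> has_mono_square c n f)"

definition vdS_number :: "nat \<Rightarrow> nat" where
  "vdS_number c = (LEAST n. n > 0 \<and> vdS_property c n)"

end

theory Submission
  imports Defs
begin

text \<open>Since \<open>9 + 16 = 25\<close>, the points \<open>a, a+9, a+16, a+25\<close> are pairwise a square apart,
  except for the pair \<open>a+9, a+16\<close>. With three colours and no monochromatic square
  difference, \<open>a+9\<close> and \<open>a+16\<close> must therefore share a colour. Applying this shift by 7 at
  \<open>11, 12, 14\<close> makes \<open>10, 11, 12, 14\<close> pairwise separated by squares
  (\<open>11-10 = 12-11 = 1\<close>, \<open>14-10 = 4\<close>, \<open>19-10 = 9\<close>, \<open>18-14 = 4\<close>, \<open>21-12 = 9\<close>), which would need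
  four colours. The argument stays inside \<open>[30]\<close>, so in fact \<open>R\<^sub>3(VS) \<le> 30\<close>.\<close>

lemma vdS_number_le:
  assumes "0 < n" and "vdS_property c n"
  shows "vdS_number c \<le> n"
  unfolding vdS_number_def using assms by (intro Least_le) simp

lemma no_four_distinct_in_card_le_3:
  assumes "finite C" "card C \<le> 3" "{a, b, c, d} \<subseteq> C" "distinct [a, b, c, d]"
  shows False
proof -
  have "card {a, b, c, d} = 4"
    using assms(4) by simp
  moreover have "card {a, b, c, d} \<le> card C"
    using assms(1,3) by (rule card_mono)
  ultimately show False
    using assms(2) by simp
qed

lemma colour_ne_square_apart:
  assumes "\<not> has_mono_square c n f" "1 \<le> a" "a + x^2 \<le> n" "0 < x"
  shows "f a \<noteq> f (a + x^2)"
proof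
  assume "f a = f (a + x^2)"
  then have "has_mono_square c n f"
    unfolding has_mono_square_def using assms(2-4)
    by (intro bexI[of _ a] bexI[of _ "a + x^2"] exI[of _ x]) auto
  with assms(1) show False ..
qed

lemma three_colouring_shift_7:
  assumes col: "\<forall>i\<in>{1..n}. f i \<in> {1..3::nat}"
    and free: "\<not> has_mono_square 3 n f"
    and a: "1 \<le> a" "a + 25 \<le> n"
  shows "f (a + 16) = f (a + 9)"
proof (rule ccontr)
  assume ne: "f (a + 16) \<noteq> f (a + 9)"
  have sep: "f u \<noteq> f (u + x^2)" if "a \<le> u" "u + x^2 \<le> a + 25" "0 < x" for u x
  proof (rule colour_ne_square_apart[OF free])
    show "1 \<le> u" "u + x^2 \<le> n"
      using that a by linarith+
  qed (fact that)
  have "f a \<noteq> f (a + 9)" "f a \<noteq> f (a + 16)" "f a \<noteq> f (a + 25)"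
    "f (a + 9) \<noteq> f (a + 25)" "f (a + 16) \<noteq> f (a + 25)"
    using sep[of a 3] sep[of a 4] sep[of a 5] sep[of "a + 9" 4] sep[of "a + 16" 3]
    by (simp_all add: power2_eq_square add.assoc)
  then have "distinct [f a, f (a + 9), f (a + 16), f (a + 25)]"
    using ne by auto
  moreover have "{f a, f (a + 9), f (a + 16), f (a + 25)} \<subseteq> {1..3}"
    using col a by simp
  ultimately show False
    by (intro no_four_distinct_in_card_le_3[of "{1..3::nat}"]) simp_all
qed

lemma vdS_property_3_30: "vdS_property 3 30"
  unfolding vdS_property_def
proof (intro allI impI)
  fix f :: "nat \<Rightarrow> nat"
  assume col: "\<forall>i\<in>{1..30}. f i \<in> {1..3}"
  show "has_mono_square 3 30 f"
  proof (rule ccontr)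
    assume free: "\<not> has_mono_square 3 30 f"
    note shift = three_colouring_shift_7[OF col free]
    note sep = colour_ne_square_apart[OF free]
    have "f 18 = f 11" "f 19 = f 12" "f 21 = f 14"
      using shift[of 2] shift[of 3] shift[of 5] by simp_all
    moreover have "f 10 \<noteq> f 11" "f 11 \<noteq> f 12" "f 10 \<noteq> f 14"
      "f 10 \<noteq> f 19" "f 14 \<noteq> f 18" "f 12 \<noteq> f 21"
      using sep[of 10 1] sep[of 11 1] sep[of 10 2] sep[of 10 3] sep[of 14 2] sep[of 12 3]
      by (simp_all add: power2_eq_square)
    ultimately have "distinct [f 10, f 11, f 12, f 14]"
      by auto
    moreover have "{f 10, f 11, f 12, f 14} \<subseteq> {1..3}"
      using col by simp
    ultimately show False
      by (intro no_four_distinct_in_card_le_3[of "{1..3::nat}"]) simp_all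
  qed
qed

theorem theorem4p3:
  shows "vdS_number 3 \<le> 68"
proof -
  have "vdS_number 3 \<le> 30"
    using vdS_property_3_30 by (intro vdS_number_le) simp_all
  then show ?thesis
    by simp
qed

end
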